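(* Let $\mu$ be a finite non-negative Borel measure on $\mathbb T$ and $n$ a positive integer. Then for every $w\in\mathbb D$, $$D_{\mu,n}\Big(\frac{1}{1-z\overline w}\Big)=\frac{|w|^{2n}}{(1-|w|^2)^n}V_\mu(w),\qquad V_\mu(w)=\int_{\mathbb T}\frac{d\mu(\lambda)}{|1-\lambda\overline w|^2}.$$
   Context: $\mathbb D$ open unit disc, $\mathbb T$ unit circle, $dA$ normalized area measure. $P_\mu(z)=\int_{\mathbb T}\frac{1-|z|^2}{|z-\zeta|^2}d\mu(\zeta)$ and, for $f\in\mathcal O(\mathbb D)$ (here $f(z)=\frac1{1-z\overline w}$ as a function of $z$), $D_{\mu,n}(f)=\frac{1}{n!(n-1)!}\int_{\mathbb D}|f^{(n)}(z)|^2P_\mu(z)(1-|z|^2)^{n-1}dA(z)$. *)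

theory Defs
  imports "HOL-Analysis.Analysis"
begin

text \<open>Finite positive Borel measures on the unit circle are modelled as finite
  measures on the Borel sets of the complex plane that vanish outside the
  unit circle.\<close>
definition circle_measure :: "complex measure \<Rightarrow> bool" where
  "circle_measure \<mu> \<longleftrightarrow> sets \<mu> = sets borel \<and> finite_measure \<mu> \<and>
     emeasure \<mu> (UNIV - sphere 0 1) = 0"

definition poisson :: "complex measure \<Rightarrow> complex \<Rightarrow> real" where
  "poisson \<mu> z = (\<integral>\<zeta>. (1 - (cmod z)\<^sup>2) / (cmod (z - \<zeta>))\<^sup>2 \<partial>\<mu>)"

definition dA :: "complex measure" where
  "dA = density (restrict_space lborel (ball 0 1)) (\<lambda>_. ennreal (1 / pi))"

definition D_mu_n :: "complex measure \<Rightarrow> nat \<Rightarrow> (complex \<Rightarrow> complex) \<Rightarrow> ennreal" where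
  "D_mu_n \<mu> n f = ennreal (1 / (fact n * fact (n - 1))) *
     (\<integral>\<^sup>+ z. ennreal ((cmod ((deriv ^^ n) f z))\<^sup>2 * poisson \<mu> z * (1 - (cmod z)\<^sup>2) ^ (n - 1)) \<partial>dA)"

definition V_mu :: "complex measure \<Rightarrow> complex \<Rightarrow> real" where
  "V_mu \<mu> w = (\<integral>\<zeta>. 1 / (cmod (1 - \<zeta> * cnj w))\<^sup>2 \<partial>\<mu>)"

end

theory Submission
  imports Defs "HOL-Complex_Analysis.Complex_Analysis"
begin

text \<open>The n-th derivative of f(z) = 1 / (1 - z cnj w) is n! (cnj w)^n / (1 - z cnj w)^(n+1).
  Writing the Poisson integral as an integral against \<mu> and exchanging the order of integration,
  it suffices to show for every \<zeta> on the circle that the integral of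
  (1 - |z|^2)^n / (|1 - z cnj w|^(2n+2) |z - \<zeta>|^2) against dA(z) equals
  1 / (n (1 - |w|^2)^n |1 - \<zeta> cnj w|^2).  The disc automorphism z = (u + w) / (1 + cnj w u)
  reduces this to the integral of (1 - |u|^2)^n / |u - \<eta>|^2 against dA(u) for a point \<eta> of the
  circle, which is 1/n: in polar coordinates, the Poisson kernel has mean value 1 on every circle
  |u| = r < 1, and 2 r (1 - r^2)^(n-1) integrates to 1/n over [0, 1].\<close>

section \<open>Lebesgue measure on the complex plane\<close>

definition complex_of_vec :: "real^2 \<Rightarrow> complex" where
  "complex_of_vec v = Complex (v$1) (v$2)"

definition vec_of_complex :: "complex \<Rightarrow> real^2" where
  "vec_of_complex z = vector [Re z, Im z]"

lemma vec_of_complex_nth [simp]: "vec_of_complex z $ 1 = Re z" "vec_of_complex z $ 2 = Im z"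
  by (simp_all add: vec_of_complex_def)

lemma complex_of_vec_of_complex [simp]: "complex_of_vec (vec_of_complex z) = z"
  by (simp add: complex_of_vec_def complex_eq_iff)

lemma vec_of_complex_of_vec [simp]: "vec_of_complex (complex_of_vec v) = v"
  by (simp add: complex_of_vec_def vec_eq_iff forall_2)

lemma complex_of_vec_axis [simp]: "complex_of_vec (axis 1 1) = 1" "complex_of_vec (axis 2 1) = \<i>"
  by (simp_all add: complex_of_vec_def axis_def complex_eq_iff)

lemma bounded_linear_complex_of_vec: "bounded_linear complex_of_vec"
  by (auto simp: linear_iff complex_of_vec_def complex_eq_iff intro: linear_conv_bounded_linear[THEN iffD1])

lemma bounded_linear_vec_of_complex: "bounded_linear vec_of_complex"
  by (auto simp: linear_iff vec_eq_iff forall_2 intro: linear_conv_bounded_linear[THEN iffD1])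

lemma complex_of_vec_borel [measurable]: "complex_of_vec \<in> borel_measurable borel"
  using bounded_linear_complex_of_vec
  by (intro borel_measurable_continuous_onI linear_continuous_on)

lemma distr_lborel_complex_of_vec: "distr lborel borel complex_of_vec = (lborel :: complex measure)"
proof (rule lborel_eqI[symmetric])
  fix l u :: complex
  assume le: "\<And>b. b \<in> Basis \<Longrightarrow> l \<bullet> b \<le> u \<bullet> b"
  have "Re l \<le> Re u" "Im l \<le> Im u"
    using le[of 1] le[of \<i>] by (auto simp: Basis_complex_def)
  moreover have Basis2: "(Basis :: (real^2) set) = {axis 1 1, axis 2 1}"
    by (auto simp: Basis_vec_def UNIV_2)
  ultimately have "emeasure lborel (box (vec_of_complex l) (vec_of_complex u)) =
      ennreal ((Re u - Re l) * (Im u - Im l))"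
    by (simp add: emeasure_lborel_box_eq box_ne_empty Basis2 axis_eq_axis
        cart_eq_inner_axis[symmetric] forall_2)
  moreover have "complex_of_vec -` box l u = box (vec_of_complex l) (vec_of_complex u)"
    by (auto simp: mem_box_cart mem_box Basis_complex_def forall_2 complex_of_vec_def)
  ultimately show "emeasure (distr lborel borel complex_of_vec) (box l u) = (\<Prod>b\<in>Basis. (u - l) \<bullet> b)"
    by (simp add: emeasure_distr Basis_complex_def)
qed simp

lemma nn_integral_lborel_complex_of_vec:
  assumes "f \<in> borel_measurable borel"
  shows "(\<integral>\<^sup>+z. f z \<partial>lborel) = (\<integral>\<^sup>+v. f (complex_of_vec v) \<partial>lborel)"
  using assms by (subst distr_lborel_complex_of_vec[symmetric]) (simp add: nn_integral_distr)

lemma absolutely_integrable_on_iff_nn_integral: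
  fixes h :: "'a::euclidean_space \<Rightarrow> real"
  assumes "\<And>x. 0 \<le> h x" and "(\<lambda>x. indicator T x * h x) \<in> borel_measurable lebesgue"
  shows "h absolutely_integrable_on T \<longleftrightarrow> (\<integral>\<^sup>+x. ennreal (indicator T x * h x) \<partial>lebesgue) < \<infinity>"
proof -
  have "(\<lambda>x. ennreal (norm (indicator T x * h x))) = (\<lambda>x. ennreal (indicator T x * h x))"
    using assms(1) by (auto simp: indicator_def)
  then show ?thesis
    unfolding set_integrable_def integrable_iff_bounded using assms(2) by (simp add: indicator_scaleR_eq_if)
qed

lemma nn_integral_eq_integral_on:
  fixes h :: "'a::euclidean_space \<Rightarrow> real"
  assumes "\<And>x. 0 \<le> h x" and "h absolutely_integrable_on T"
  shows "(\<integral>\<^sup>+x. ennreal (indicator T x * h x) \<partial>lebesgue) = ennreal (integral T h)"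
proof -
  have "(\<integral>\<^sup>+x. ennreal (indicator T x * h x) \<partial>lebesgue) = ennreal (LINT x | lebesgue. indicator T x * h x)"
    using assms unfolding set_integrable_def by (intro nn_integral_eq_integral) (auto simp: indicator_scaleR_eq_if)
  then show ?thesis
    using set_lebesgue_integral_eq_integral(2)[OF assms(2)]
    by (simp add: set_lebesgue_integral_def indicator_scaleR_eq_if)
qed

lemma nn_integral_change_of_variables_cart:
  fixes f :: "real^'m::{finite,wellorder} \<Rightarrow> real"
  assumes S: "S \<in> sets lebesgue"
    and der: "\<And>x. x \<in> S \<Longrightarrow> (g has_derivative g' x) (at x within S)"
    and inj: "inj_on g S"
    and f0: "\<And>y. 0 \<le> f y"
    and fm: "(\<lambda>x. indicator (g ` S) x * f x) \<in> borel_measurable lebesgue"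
    and hm: "(\<lambda>x. indicator S x * (\<bar>det (matrix (g' x))\<bar> * f (g x))) \<in> borel_measurable lebesgue"
  shows "(\<integral>\<^sup>+x. ennreal (indicator (g ` S) x * f x) \<partial>lebesgue) =
         (\<integral>\<^sup>+x. ennreal (indicator S x * (\<bar>det (matrix (g' x))\<bar> * f (g x))) \<partial>lebesgue)"
proof -
  let ?h = "\<lambda>x. \<bar>det (matrix (g' x))\<bar> * f (g x)"
  have h0: "\<And>x. 0 \<le> ?h x" using f0 by simp
  have cov: "?h absolutely_integrable_on S \<and> integral S ?h = b \<longleftrightarrow>
      f absolutely_integrable_on (g ` S) \<and> integral (g ` S) f = b" for b
    using has_absolute_integral_change_of_variables[OF S der inj, of "\<lambda>x. vec (f x) :: real^1" "vec b"]
    by (simp add: absolutely_integrable_on_1_iff integral_on_1_eq vec_eq_iff)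
  show ?thesis
  proof (cases "f absolutely_integrable_on (g ` S)")
    case True
    with cov have "?h absolutely_integrable_on S" "integral S ?h = integral (g ` S) f"
      by blast+
    with True show ?thesis
      using nn_integral_eq_integral_on[of f, OF f0] nn_integral_eq_integral_on[of ?h, OF h0] by simp
  next
    case False
    with cov have "\<not> ?h absolutely_integrable_on S" by blast
    with False show ?thesis
      using absolutely_integrable_on_iff_nn_integral[OF f0 fm] absolutely_integrable_on_iff_nn_integral[OF h0 hm]
      by (simp add: less_top[symmetric])
  qed
qed

definition jacobian_det :: "(complex \<Rightarrow> complex) \<Rightarrow> real" where
  "jacobian_det A = Re (A 1) * Im (A \<i>) - Im (A 1) * Re (A \<i>)"

lemma jacobian_det_mult: "jacobian_det ((*) c) = (cmod c)\<^sup>2"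
  unfolding jacobian_det_def cmod_power2 by (simp add: power2_eq_square)

lemma has_derivative_conj_complex_of_vec:
  assumes "(g has_derivative g') (at (complex_of_vec v) within complex_of_vec ` T)"
  shows "((vec_of_complex \<circ> g \<circ> complex_of_vec) has_derivative (vec_of_complex \<circ> g' \<circ> complex_of_vec))
    (at v within T)"
proof -
  have "((g \<circ> complex_of_vec) has_derivative (g' \<circ> complex_of_vec)) (at v within T)"
    using assms by (intro diff_chain_within bounded_linear_imp_has_derivative bounded_linear_complex_of_vec)
  then have "((vec_of_complex \<circ> (g \<circ> complex_of_vec)) has_derivative (vec_of_complex \<circ> (g' \<circ> complex_of_vec)))
      (at v within T)"
    by (rule diff_chain_within[OF _ bounded_linear_imp_has_derivative[OF bounded_linear_vec_of_complex]])
  then show ?thesis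
    by (simp add: o_assoc)
qed

lemma nn_integral_change_of_variables_complex:
  fixes f :: "complex \<Rightarrow> real" and g :: "complex \<Rightarrow> complex"
  assumes S: "S \<in> sets borel"
    and der: "\<And>x. x \<in> S \<Longrightarrow> (g has_derivative g' x) (at x within S)"
    and inj: "inj_on g S"
    and f0: "\<And>y. 0 \<le> f y"
    and fm: "(\<lambda>x. indicator (g ` S) x * f x) \<in> borel_measurable borel"
    and hm: "(\<lambda>x. indicator S x * (\<bar>jacobian_det (g' x)\<bar> * f (g x))) \<in> borel_measurable borel"
  shows "(\<integral>\<^sup>+x. ennreal (indicator (g ` S) x * f x) \<partial>lborel) =
         (\<integral>\<^sup>+x. ennreal (indicator S x * (\<bar>jacobian_det (g' x)\<bar> * f (g x))) \<partial>lborel)"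
proof -
  define S' where "S' = complex_of_vec -` S"
  define G where "G = vec_of_complex \<circ> g \<circ> complex_of_vec"
  define G' where "G' v = vec_of_complex \<circ> g' (complex_of_vec v) \<circ> complex_of_vec" for v
  have S': "S' \<in> sets lebesgue"
    using measurable_sets[OF complex_of_vec_borel S] by (simp add: S'_def)
  have image_S': "complex_of_vec ` S' = S"
    unfolding S'_def by (auto simp: image_iff) (metis complex_of_vec_of_complex)
  have der_G: "(G has_derivative G' v) (at v within S')" if "v \<in> S'" for v
  proof -
    have "(g has_derivative g' (complex_of_vec v)) (at (complex_of_vec v) within complex_of_vec ` S')"
      using der that image_S' by (auto simp: S'_def)
    then show ?thesis
      unfolding G_def G'_def by (rule has_derivative_conj_complex_of_vec)
  qed
  have inj_G: "inj_on G S'"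
    using inj unfolding inj_on_def G_def S'_def
    by (metis complex_of_vec_of_complex vec_of_complex_of_vec vimageE o_apply)
  have det_G': "det (matrix (G' v)) = jacobian_det (g' (complex_of_vec v))" for v
    by (simp add: det_2 matrix_def G'_def jacobian_det_def)
  have G_image: "indicator (G ` S') v = (indicator (g ` S) (complex_of_vec v) :: real)" for v
  proof -
    have "v \<in> G ` S' \<longleftrightarrow> complex_of_vec v \<in> g ` S"
      unfolding G_def S'_def
      by (auto simp: image_iff) (metis complex_of_vec_of_complex vec_of_complex_of_vec vimageI2)
    then show ?thesis by (simp add: indicator_def)
  qed
  have S'_indicator: "indicator S' v = (indicator S (complex_of_vec v) :: real)" for v
    by (simp add: S'_def indicator_def)
  have G: "complex_of_vec (G v) = g (complex_of_vec v)" for v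
    by (simp add: G_def)
  have "(\<lambda>x. indicator (G ` S') x * (f \<circ> complex_of_vec) x) \<in> borel_measurable lebesgue"
    using measurable_compose[OF complex_of_vec_borel fm] measurable_completion[of _ lborel]
    by (simp add: G_image o_def)
  moreover have "(\<lambda>x. indicator S' x * (\<bar>det (matrix (G' x))\<bar> * (f \<circ> complex_of_vec) (G x)))
      \<in> borel_measurable lebesgue"
    using measurable_compose[OF complex_of_vec_borel hm] measurable_completion[of _ lborel]
    by (simp add: S'_indicator det_G' G o_def)
  ultimately have "(\<integral>\<^sup>+v. ennreal (indicator (g ` S) (complex_of_vec v) * f (complex_of_vec v)) \<partial>lborel) =
      (\<integral>\<^sup>+v. ennreal (indicator S (complex_of_vec v) * (\<bar>jacobian_det (g' (complex_of_vec v))\<bar> *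
        f (g (complex_of_vec v)))) \<partial>lborel)"
    using nn_integral_change_of_variables_cart[OF S' der_G inj_G, of "f \<circ> complex_of_vec"] f0
    by (simp add: G_image S'_indicator det_G' G nn_integral_completion)
  then show ?thesis
    using fm hm by (subst (1 2) nn_integral_lborel_complex_of_vec) auto
qed

section \<open>Polar coordinates\<close>

lemma Complex_pair_borel_measurable [measurable]:
  "(\<lambda>p. Complex (fst p) (snd p)) \<in> borel_measurable (lborel \<Otimes>\<^sub>M lborel)"
proof -
  have "continuous_on UNIV (\<lambda>p::real \<times> real. Complex (fst p) (snd p))"
    unfolding Complex_eq by (intro continuous_intros)
  then show ?thesis
    using borel_measurable_continuous_onI by (simp add: lborel_prod)
qed

lemma distr_lborel_pair_Complex:
  "distr (lborel \<Otimes>\<^sub>M lborel) borel (\<lambda>p. Complex (fst p) (snd p)) = (lborel :: complex measure)"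
proof (rule lborel_eqI[symmetric])
  fix l u :: complex
  assume le: "\<And>b. b \<in> Basis \<Longrightarrow> l \<bullet> b \<le> u \<bullet> b"
  have "Re l \<le> Re u" "Im l \<le> Im u"
    using le[of 1] le[of \<i>] by (auto simp: Basis_complex_def)
  then have "emeasure (lborel \<Otimes>\<^sub>M lborel) ({Re l<..<Re u} \<times> {Im l<..<Im u}) =
      ennreal ((Re u - Re l) * (Im u - Im l))"
    by (simp add: lborel.emeasure_pair_measure_Times ennreal_mult)
  moreover have "(\<lambda>p. Complex (fst p) (snd p)) -` box l u \<inter> space (lborel \<Otimes>\<^sub>M lborel) =
      {Re l<..<Re u} \<times> {Im l<..<Im u}"
    by (auto simp: mem_box Basis_complex_def space_pair_measure)
  ultimately show "emeasure (distr (lborel \<Otimes>\<^sub>M lborel) borel (\<lambda>p. Complex (fst p) (snd p))) (box l u) =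
      (\<Prod>b\<in>Basis. (u - l) \<bullet> b)"
    by (simp add: emeasure_distr Basis_complex_def)
qed (simp add: lborel_prod[symmetric])

lemma nn_integral_lborel_complex_iterated:
  assumes [measurable]: "f \<in> borel_measurable borel"
  shows "(\<integral>\<^sup>+z. f z \<partial>lborel) = (\<integral>\<^sup>+x. \<integral>\<^sup>+y. f (Complex x y) \<partial>lborel \<partial>lborel)"
proof -
  have "(\<integral>\<^sup>+z. f z \<partial>lborel) = (\<integral>\<^sup>+p. f (Complex (fst p) (snd p)) \<partial>(lborel \<Otimes>\<^sub>M lborel))"
    by (subst distr_lborel_pair_Complex[symmetric]) (simp add: nn_integral_distr)
  also have "\<dots> = (\<integral>\<^sup>+x. \<integral>\<^sup>+y. f (Complex x y) \<partial>lborel \<partial>lborel)"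
    by (subst lborel.nn_integral_fst[symmetric]) auto
  finally show ?thesis .
qed

lemma real_axis_null_sets: "{z::complex. Im z = 0} \<in> null_sets lborel"
proof -
  have "negligible {z::complex. \<i> \<bullet> z = 0}"
    by (rule negligible_hyperplane) simp
  then have "{z::complex. Im z = 0} \<in> null_sets lebesgue"
    by (simp add: negligible_iff_null_sets)
  moreover have "{z::complex. Im z = 0} \<in> sets borel"
    by measurable
  ultimately show ?thesis
    by (simp add: null_sets_completion_iff)
qed

text \<open>The point with polar coordinates (r, t) is encoded as the complex number r + i t, so that the
  change of variables formula for maps of the plane applies to the polar map.\<close>

definition polar :: "complex \<Rightarrow> complex" where
  "polar z = of_real (Re z) * cis (Im z)"

definition polar_rectangle :: "complex set" where
  "polar_rectangle = {z. 0 < Re z \<and> Re z < 1 \<and> 0 < Im z \<and> Im z < 2 * pi}"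

lemma has_derivative_polar:
  "(polar has_derivative (\<lambda>h. (of_real (Re h) + \<i> * of_real (Re z * Im h)) * cis (Im z))) (at z within S)"
  unfolding polar_def[abs_def]
  by (auto intro!: derivative_eq_intros bounded_linear.has_derivative[OF bounded_linear_Re]
      bounded_linear.has_derivative[OF bounded_linear_Im] simp: algebra_simps scaleR_conv_of_real)

lemma jacobian_det_polar: "jacobian_det (\<lambda>h. (of_real (Re h) + \<i> * of_real (Re z * Im h)) * cis (Im z)) = Re z"
proof -
  have "Re z * (sin (Im z))\<^sup>2 + Re z * (cos (Im z))\<^sup>2 = Re z"
    by (metis distrib_left mult.right_neutral sin_cos_squared_add)
  then show ?thesis
    by (simp add: jacobian_det_def power2_eq_square algebra_simps)
qed

lemma norm_polar: "0 \<le> Re z \<Longrightarrow> cmod (polar z) = Re z"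
  by (simp add: polar_def norm_mult)

lemma Arg2pi_polar: "z \<in> polar_rectangle \<Longrightarrow> Arg2pi (polar z) = Im z"
  unfolding polar_def polar_rectangle_def cis_conv_exp by (rule Arg2pi_unique) auto

lemma polar_image: "polar ` polar_rectangle = ball 0 1 - {z. Im z = 0 \<and> 0 \<le> Re z}"
proof safe
  fix z assume z: "z \<in> polar_rectangle"
  then show "polar z \<in> ball 0 1"
    by (simp add: norm_polar polar_rectangle_def)
  assume "Im (polar z) = 0" "0 \<le> Re (polar z)"
  then have "Arg2pi (polar z) = 0"
    by (simp add: Arg2pi_eq_0 complex_is_Real_iff)
  then show False
    using Arg2pi_polar[OF z] z by (simp add: polar_rectangle_def)
next
  fix z :: complex
  assume z: "z \<in> ball 0 1" "z \<notin> polar ` polar_rectangle"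
  have "Im z = 0 \<and> 0 \<le> Re z"
  proof (rule ccontr)
    assume "\<not> (Im z = 0 \<and> 0 \<le> Re z)"
    then have "z \<noteq> 0" "Arg2pi z \<noteq> 0"
      by (auto simp: Arg2pi_eq_0 complex_is_Real_iff)
    then have "Complex (cmod z) (Arg2pi z) \<in> polar_rectangle"
      using Arg2pi[of z] z by (simp add: polar_rectangle_def order_le_neq_trans)
    moreover have "polar (Complex (cmod z) (Arg2pi z)) = z"
      using Arg2pi_eq[of z] by (simp add: polar_def cis_conv_exp)
    ultimately show False
      using z by (metis image_eqI)
  qed
  then show "Im z = 0" "0 \<le> Re z" by auto
qed

lemma inj_on_polar: "inj_on polar polar_rectangle"
proof (rule inj_onI)
  fix z1 z2 assume z: "z1 \<in> polar_rectangle" "z2 \<in> polar_rectangle" "polar z1 = polar z2"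
  then have "Re z1 = Re z2"
    using norm_polar[of z1] norm_polar[of z2] by (simp add: polar_rectangle_def)
  moreover have "Im z1 = Im z2"
    using z Arg2pi_polar[of z1] Arg2pi_polar[of z2] by simp
  ultimately show "z1 = z2"
    by (simp add: complex_eq_iff)
qed

lemma nn_integral_unit_disc_polar:
  fixes G :: "complex \<Rightarrow> real"
  assumes G0: "\<And>z. cmod z < 1 \<Longrightarrow> 0 \<le> G z" and G: "G \<in> borel_measurable borel"
  shows "(\<integral>\<^sup>+z. ennreal (indicator (ball 0 1) z * G z) \<partial>lborel) =
    (\<integral>\<^sup>+r. \<integral>\<^sup>+t. ennreal (indicator {0<..<1} r * indicator {0<..<2*pi} t * (r * G (of_real r * cis t)))
      \<partial>lborel \<partial>lborel)"
proof -
  define H where "H z = indicator (ball 0 1) z * G z" for z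
  have H0: "0 \<le> H z" for z
    using G0 by (simp add: H_def indicator_def)
  have [measurable]: "H \<in> borel_measurable borel"
    unfolding H_def using G by (intro borel_measurable_times borel_measurable_indicator) auto
  have rectangle [measurable]: "polar_rectangle \<in> sets borel"
    unfolding polar_rectangle_def by measurable
  have "{z::complex. Im z = 0 \<and> 0 \<le> Re z} \<in> sets borel"
    by (intro borel_closed closed_Collect_conj closed_Collect_eq closed_Collect_le continuous_intros)
  then have [measurable]: "polar ` polar_rectangle \<in> sets borel"
    unfolding polar_image by auto
  have [measurable]: "polar \<in> borel_measurable borel"
    unfolding polar_def by (intro borel_measurable_continuous_onI continuous_intros)
  have "AE z in lborel. ennreal (indicator (ball 0 1) z * G z) =
      ennreal (indicator (polar ` polar_rectangle) z * H z)"
    by (rule AE_I'[OF real_axis_null_sets]) (auto simp: polar_image indicator_def H_def)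
  then have "(\<integral>\<^sup>+z. ennreal (indicator (ball 0 1) z * G z) \<partial>lborel) =
      (\<integral>\<^sup>+z. ennreal (indicator (polar ` polar_rectangle) z * H z) \<partial>lborel)"
    by (rule nn_integral_cong_AE)
  also have "\<dots> = (\<integral>\<^sup>+z. ennreal (indicator polar_rectangle z *
      (\<bar>jacobian_det (\<lambda>h. (of_real (Re h) + \<i> * of_real (Re z * Im h)) * cis (Im z))\<bar> * H (polar z)))
      \<partial>lborel)"
    by (rule nn_integral_change_of_variables_complex[OF rectangle has_derivative_polar inj_on_polar H0],
      measurable, unfold jacobian_det_polar, measurable)
  also have "\<dots> = (\<integral>\<^sup>+z. ennreal (indicator polar_rectangle z * (Re z * H (polar z))) \<partial>lborel)"
    unfolding jacobian_det_polar by (intro nn_integral_cong) (simp add: indicator_def polar_rectangle_def)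
  also have "\<dots> = (\<integral>\<^sup>+r. \<integral>\<^sup>+t. ennreal (indicator polar_rectangle (Complex r t) *
      (r * H (polar (Complex r t)))) \<partial>lborel \<partial>lborel)"
    by (subst nn_integral_lborel_complex_iterated) auto
  also have "\<dots> = (\<integral>\<^sup>+r. \<integral>\<^sup>+t. ennreal (indicator {0<..<1} r * indicator {0<..<2*pi} t *
      (r * G (of_real r * cis t))) \<partial>lborel \<partial>lborel)"
    by (intro nn_integral_cong) (auto simp: indicator_def polar_rectangle_def polar_def H_def norm_mult)
  finally show ?thesis .
qed

section \<open>Integrals of the Poisson kernel\<close>

lemma Re_herglotz_kernel:
  assumes "cmod \<eta> = 1"
  shows "Re ((\<eta> + u) / (\<eta> - u)) = (1 - (cmod u)\<^sup>2) / (cmod (u - \<eta>))\<^sup>2"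
proof -
  have "(Re \<eta>)\<^sup>2 + (Im \<eta>)\<^sup>2 = 1"
    using assms by (simp add: cmod_power2[symmetric])
  then have "(Re \<eta> + Re u) * (Re \<eta> - Re u) + (Im \<eta> + Im u) * (Im \<eta> - Im u) = 1 - ((Re u)\<^sup>2 + (Im u)\<^sup>2)"
    by (simp add: algebra_simps power2_eq_square)
  moreover have "(cmod (u - \<eta>))\<^sup>2 = (Re \<eta> - Re u)\<^sup>2 + (Im \<eta> - Im u)\<^sup>2"
    unfolding cmod_power2 by (simp add: power2_eq_square algebra_simps)
  ultimately show ?thesis
    by (simp add: Re_divide cmod_power2)
qed

text \<open>Mean value property of the holomorphic function (\<eta> + u) / (\<eta> - u), whose real part is
  the Poisson kernel.\<close>
lemma has_integral_poisson_kernel_circle: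
  assumes r: "0 < r" "r < 1" and \<eta>: "cmod \<eta> = 1"
  shows "((\<lambda>t. (1 - r\<^sup>2) / (cmod (of_real r * cis t - \<eta>))\<^sup>2) has_integral 2 * pi) {0<..<2 * pi}"
proof -
  define h where "h u = (\<eta> + u) / (\<eta> - u)" for u
  have nz: "\<eta> - u \<noteq> 0" if "u \<in> cball 0 r" for u
    using that r \<eta> by auto
  have "continuous_on (cball 0 r) h" "h holomorphic_on ball 0 r"
    unfolding h_def using nz by (auto intro!: continuous_intros holomorphic_intros)
  then have "((\<lambda>u. h u / (u - 0)) has_contour_integral (2 * of_real pi * \<i> * h 0)) (circlepath 0 r)"
    using r by (intro Cauchy_integral_circlepath) auto
  then have "((\<lambda>t. h (0 + r * cis t) / (0 + r * cis t - 0) * r * \<i> * cis t) has_integral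
      (2 * of_real pi * \<i> * h 0)) {0..2 * pi}"
    unfolding circlepath_def by (subst (asm) has_contour_integral_part_circlepath_iff) auto
  moreover have "h 0 = 1"
    using \<eta> by (auto simp: h_def)
  moreover have "h (0 + r * cis t) / (0 + r * cis t - 0) * r * \<i> * cis t = \<i> * h (r * cis t)" for t
    using r by (simp add: field_simps)
  ultimately have "((\<lambda>t. \<i> * h (r * cis t)) has_integral (\<i> * (2 * of_real pi))) {0..2 * pi}"
    by (simp add: mult.commute mult.left_commute)
  then have "((\<lambda>t. h (r * cis t)) has_integral (2 * of_real pi)) {0..2 * pi}"
    by (subst (asm) has_integral_mult_right_iff) auto
  then have "((Re \<circ> (\<lambda>t. h (r * cis t))) has_integral Re (2 * of_real pi)) {0..2 * pi}"
    by (rule has_integral_linear[OF _ bounded_linear_Re])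
  then have "((\<lambda>t. Re (h (r * cis t))) has_integral 2 * pi) {0..2 * pi}"
    by (simp add: o_def)
  moreover have "Re (h (r * cis t)) = (1 - r\<^sup>2) / (cmod (of_real r * cis t - \<eta>))\<^sup>2" for t
    unfolding h_def Re_herglotz_kernel[OF \<eta>] using r by (simp add: norm_mult)
  ultimately show ?thesis
    by (simp add: has_integral_Icc_iff_Ioo)
qed

lemma has_integral_radial_weight:
  assumes "n \<ge> 1"
  shows "((\<lambda>r::real. 2 * pi * (r * (1 - r\<^sup>2) ^ (n - 1))) has_integral pi / n) {0<..<1}"
proof -
  define F where "F r = - pi * (1 - r\<^sup>2) ^ n / n" for r :: real
  have "((\<lambda>r::real. 2 * pi * (r * (1 - r\<^sup>2) ^ (n - 1))) has_integral F 1 - F 0) {0..1}"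
  proof (rule fundamental_theorem_of_calculus)
    show "(F has_vector_derivative 2 * pi * (r * (1 - r\<^sup>2) ^ (n - 1))) (at r within {0..1})" for r
      unfolding F_def has_real_derivative_iff_has_vector_derivative[symmetric]
      using assms by (auto intro!: derivative_eq_intros simp: field_simps)
  qed simp
  moreover have "F 1 - F 0 = pi / n"
    using assms by (simp add: F_def)
  ultimately show ?thesis
    by (simp add: has_integral_Icc_iff_Ioo)
qed

lemma nn_integral_angular_poisson_weight:
  assumes \<eta>: "cmod \<eta> = 1" and n: "n \<ge> 1" and r: "0 < r" "r < 1"
  shows "(\<integral>\<^sup>+t. ennreal (indicator {0<..<2*pi} t *
      (r * ((1 - (cmod (of_real r * cis t))\<^sup>2) ^ n / (cmod (of_real r * cis t - \<eta>))\<^sup>2))) \<partial>lborel) =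
    ennreal (2 * pi * (r * (1 - r\<^sup>2) ^ (n - 1)))"
proof -
  have weight: "0 \<le> r * (1 - r\<^sup>2) ^ (n - 1)"
    using r by (simp add: power_le_one)
  have nonneg: "0 \<le> indicator {0<..<2*pi} t * ((1 - r\<^sup>2) / (cmod (of_real r * cis t - \<eta>))\<^sup>2)" for t
    using r by (simp add: power_le_one)
  have "(1 - r\<^sup>2) ^ n = (1 - r\<^sup>2) ^ (n - 1) * (1 - r\<^sup>2)"
    using n by (cases n) auto
  then have factor: "indicator {0<..<2*pi} t * (r * ((1 - (cmod (of_real r * cis t))\<^sup>2) ^ n / (cmod (of_real r * cis t - \<eta>))\<^sup>2)) =
      (r * (1 - r\<^sup>2) ^ (n - 1)) * (indicator {0<..<2*pi} t * ((1 - r\<^sup>2) / (cmod (of_real r * cis t - \<eta>))\<^sup>2))"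
    for t using r by (simp add: norm_mult)
  have "(\<integral>\<^sup>+t. ennreal (indicator {0<..<2*pi} t *
      (r * ((1 - (cmod (of_real r * cis t))\<^sup>2) ^ n / (cmod (of_real r * cis t - \<eta>))\<^sup>2))) \<partial>lborel) =
      (\<integral>\<^sup>+t. ennreal (r * (1 - r\<^sup>2) ^ (n - 1)) *
        ennreal (indicator {0<..<2*pi} t * ((1 - r\<^sup>2) / (cmod (of_real r * cis t - \<eta>))\<^sup>2)) \<partial>lborel)"
    unfolding factor using ennreal_mult[OF weight nonneg] by simp
  also have "\<dots> = ennreal (r * (1 - r\<^sup>2) ^ (n - 1)) *
      (\<integral>\<^sup>+t. ennreal (indicator {0<..<2*pi} t * ((1 - r\<^sup>2) / (cmod (of_real r * cis t - \<eta>))\<^sup>2)) \<partial>lborel)"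
    by (intro nn_integral_cmult measurable_compose[OF _ measurable_ennreal] borel_measurable_times
        borel_measurable_indicator borel_measurable_divide)
      (auto intro!: borel_measurable_continuous_onI continuous_intros)
  also have "\<dots> = ennreal (r * (1 - r\<^sup>2) ^ (n - 1)) * ennreal (2 * pi)"
    using r by (subst nn_integral_has_integral_lebesgue[OF _ has_integral_poisson_kernel_circle[OF r \<eta>]])
      (auto simp: power_le_one)
  finally show ?thesis
    using weight by (simp add: ennreal_mult[symmetric] mult_ac)
qed

lemma nn_integral_disc_poisson_weight:
  assumes \<eta>: "cmod \<eta> = 1" and n: "n \<ge> 1"
  shows "(\<integral>\<^sup>+u. ennreal (indicator (ball 0 1) u * ((1 - (cmod u)\<^sup>2) ^ n / (cmod (u - \<eta>))\<^sup>2)) \<partial>lborel) =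
    ennreal (pi / n)"
proof -
  have "(\<integral>\<^sup>+u. ennreal (indicator (ball 0 1) u * ((1 - (cmod u)\<^sup>2) ^ n / (cmod (u - \<eta>))\<^sup>2)) \<partial>lborel) =
      (\<integral>\<^sup>+r. \<integral>\<^sup>+t. ennreal (indicator {0<..<1} r * indicator {0<..<2*pi} t *
        (r * ((1 - (cmod (of_real r * cis t))\<^sup>2) ^ n / (cmod (of_real r * cis t - \<eta>))\<^sup>2))) \<partial>lborel \<partial>lborel)"
    by (rule nn_integral_unit_disc_polar) (auto simp: power_le_one abs_square_le_1)
  also have "\<dots> = (\<integral>\<^sup>+r. ennreal (indicator {0<..<1} r * (2 * pi * (r * (1 - r\<^sup>2) ^ (n - 1)))) \<partial>lborel)"
  proof (intro nn_integral_cong)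
    fix r :: real
    show "(\<integral>\<^sup>+t. ennreal (indicator {0<..<1} r * indicator {0<..<2*pi} t *
        (r * ((1 - (cmod (of_real r * cis t))\<^sup>2) ^ n / (cmod (of_real r * cis t - \<eta>))\<^sup>2))) \<partial>lborel) =
      ennreal (indicator {0<..<1} r * (2 * pi * (r * (1 - r\<^sup>2) ^ (n - 1))))"
      using nn_integral_angular_poisson_weight[OF \<eta> n, of r] by (cases "0 < r \<and> r < 1") auto
  qed
  also have "\<dots> = ennreal (pi / n)"
    by (rule nn_integral_has_integral_lebesgue[OF _ has_integral_radial_weight[OF n]])
      (auto simp: power_le_one)
  finally show ?thesis .
qed

section \<open>Disc automorphisms\<close>

lemma one_minus_cnj_mult_nonzero:
  assumes "cmod w < 1" "cmod u \<le> 1"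
  shows "1 - cnj w * u \<noteq> 0"
proof -
  have "cmod (cnj w * u) < 1"
    using assms mult_left_le[of "cmod u" "cmod w"] by (simp add: norm_mult)
  then show ?thesis
    by auto
qed

lemma Moebius_function_0_norm_identity:
  "(cmod (1 - cnj w * u))\<^sup>2 - (cmod (u - w))\<^sup>2 = (1 - (cmod w)\<^sup>2) * (1 - (cmod u)\<^sup>2)"
  unfolding cmod_power2 by (simp add: power2_eq_square algebra_simps)

lemma one_minus_norm_Moebius_function_0:
  assumes "1 - cnj w * u \<noteq> 0"
  shows "1 - (cmod (Moebius_function 0 w u))\<^sup>2 =
    (1 - (cmod w)\<^sup>2) * (1 - (cmod u)\<^sup>2) / (cmod (1 - cnj w * u))\<^sup>2"
  using assms Moebius_function_0_norm_identity[of w u]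
  by (simp add: Moebius_function_simple norm_divide power_divide field_simps)

lemma norm_Moebius_function_0_sphere:
  assumes "cmod w < 1" "cmod \<zeta> = 1"
  shows "cmod (Moebius_function 0 w \<zeta>) = 1"
  using one_minus_norm_Moebius_function_0[OF one_minus_cnj_mult_nonzero[OF assms(1)], of \<zeta>] assms
    norm_ge_zero[of "Moebius_function 0 w \<zeta>"]
  by (simp add: power2_eq_1_iff)

lemma has_field_derivative_Moebius_function_0:
  assumes "1 - cnj w * u \<noteq> 0"
  shows "(Moebius_function 0 w has_field_derivative of_real (1 - (cmod w)\<^sup>2) / (1 - cnj w * u)\<^sup>2) (at u)"
proof -
  have "cnj w * w = (cmod w)\<^sup>2"
    by (simp add: mult.commute complex_mult_cnj cmod_power2)
  then show ?thesis
    unfolding Moebius_function_simple[abs_def] using assms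
    by (auto intro!: derivative_eq_intros simp: field_simps power2_eq_square)
qed

lemma Moebius_function_0_image:
  assumes "cmod w < 1"
  shows "Moebius_function 0 w ` ball 0 1 = ball 0 1"
proof
  show "Moebius_function 0 w ` ball 0 1 \<subseteq> ball 0 1"
    using Moebius_function_norm_lt_1[OF assms] by auto
  show "ball 0 1 \<subseteq> Moebius_function 0 w ` ball 0 1"
  proof
    fix z :: complex assume "z \<in> ball 0 1"
    then have "Moebius_function 0 (- w) z \<in> ball 0 1" "Moebius_function 0 w (Moebius_function 0 (- w) z) = z"
      using assms Moebius_function_norm_lt_1[of "- w" z] Moebius_function_compose[of w "- w" z] by auto
    then show "z \<in> Moebius_function 0 w ` ball 0 1"
      by (metis image_eqI)
  qed
qed

lemma inj_on_Moebius_function_0: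
  assumes "cmod w < 1"
  shows "inj_on (Moebius_function 0 w) (ball 0 1)"
  by (rule inj_on_inverseI[of _ "Moebius_function 0 (- w)"])
    (use assms Moebius_function_compose[of "- w" w] in auto)

lemma nn_integral_unit_disc_Moebius:
  fixes f :: "complex \<Rightarrow> real"
  assumes w: "cmod w < 1" and f0: "\<And>z. cmod z < 1 \<Longrightarrow> 0 \<le> f z" and f: "f \<in> borel_measurable borel"
  shows "(\<integral>\<^sup>+z. ennreal (indicator (ball 0 1) z * f z) \<partial>lborel) =
    (\<integral>\<^sup>+u. ennreal (indicator (ball 0 1) u *
      ((cmod (of_real (1 - (cmod w)\<^sup>2) / (1 - cnj w * u)\<^sup>2))\<^sup>2 * f (Moebius_function 0 w u))) \<partial>lborel)"
proof -
  define \<phi> where "\<phi> = Moebius_function 0 w"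
  define D where "D u = of_real (1 - (cmod w)\<^sup>2) / (1 - cnj w * u)\<^sup>2" for u
  define H where "H z = indicator (ball 0 1) z * f z" for z
  have H0: "0 \<le> H z" for z
    using f0 by (simp add: H_def indicator_def)
  have [measurable]: "H \<in> borel_measurable borel"
    unfolding H_def using f by (intro borel_measurable_times borel_measurable_indicator) auto
  have [measurable]: "\<phi> \<in> borel_measurable borel"
    unfolding \<phi>_def Moebius_function_simple[abs_def]
    by (intro borel_measurable_divide borel_measurable_continuous_onI continuous_intros)
  have [measurable]: "(\<lambda>u. (cmod (D u))\<^sup>2) \<in> borel_measurable borel"
    unfolding D_def norm_divide power_divide
    by (intro borel_measurable_divide borel_measurable_continuous_onI continuous_intros)
  have [measurable]: "ball (0::complex) 1 \<in> sets borel"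
    by simp
  have image: "\<phi> ` ball 0 1 = ball 0 1"
    using Moebius_function_0_image[OF w] by (simp add: \<phi>_def)
  have der: "(\<phi> has_derivative (*) (D u)) (at u within ball 0 1)" if "u \<in> ball 0 1" for u
    using has_field_derivative_Moebius_function_0[of w u] one_minus_cnj_mult_nonzero[of w u] w that
    by (auto simp: \<phi>_def D_def has_field_derivative_def intro: has_derivative_at_withinI)
  have "(\<integral>\<^sup>+z. ennreal (indicator (ball 0 1) z * f z) \<partial>lborel) =
      (\<integral>\<^sup>+z. ennreal (indicator (\<phi> ` ball 0 1) z * H z) \<partial>lborel)"
    by (intro nn_integral_cong) (simp add: image H_def indicator_def)
  also have "\<dots> = (\<integral>\<^sup>+u. ennreal (indicator (ball 0 1) u * (\<bar>jacobian_det ((*) (D u))\<bar> * H (\<phi> u))) \<partial>lborel)"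
  proof (rule nn_integral_change_of_variables_complex[OF _ der _ H0])
    show "inj_on \<phi> (ball 0 1)"
      using inj_on_Moebius_function_0[OF w] by (simp add: \<phi>_def)
    show "(\<lambda>u. indicator (ball 0 1) u * (\<bar>jacobian_det ((*) (D u))\<bar> * H (\<phi> u))) \<in> borel_measurable borel"
      unfolding jacobian_det_mult by measurable
  qed (simp_all add: image)
  also have "\<dots> = (\<integral>\<^sup>+u. ennreal (indicator (ball 0 1) u * ((cmod (D u))\<^sup>2 * f (\<phi> u))) \<partial>lborel)"
    using Moebius_function_norm_lt_1[OF w]
    by (intro nn_integral_cong) (simp add: jacobian_det_mult H_def indicator_def \<phi>_def)
  finally show ?thesis
    by (simp only: D_def \<phi>_def)
qed

text \<open>Up to the factor (n!)^2 |w|^(2n), disc_kernel n w \<zeta> z is the integrand of D_mu_n for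
  f(z) = 1 / (1 - z cnj w) with respect to dA(z) and d\<mu>(\<zeta>).\<close>

definition disc_kernel :: "nat \<Rightarrow> complex \<Rightarrow> complex \<Rightarrow> complex \<Rightarrow> real" where
  "disc_kernel n w \<zeta> z = (1 - (cmod z)\<^sup>2) ^ n / ((cmod (1 - z * cnj w)) ^ (2 * n + 2) * (cmod (z - \<zeta>))\<^sup>2)"

lemma disc_kernel_nonneg: "cmod z \<le> 1 \<Longrightarrow> 0 \<le> disc_kernel n w \<zeta> z"
  by (simp add: disc_kernel_def power_le_one abs_square_le_1)

lemma disc_kernel_substitution_algebra:
  fixes W B c d U :: real
  assumes "W > 0" "B > 0" "c > 0" "d > 0"
  shows "(W / B\<^sup>2)\<^sup>2 * ((W * U / B\<^sup>2) ^ n / ((W / B) ^ (2 * n + 2) * (c * d / B)\<^sup>2)) =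
    U ^ n / (W ^ n * c\<^sup>2 * d\<^sup>2)"
proof -
  have "(W / B) ^ (2 * n + 2) = W ^ n * W ^ n * W\<^sup>2 / (B ^ n * B ^ n * B\<^sup>2)"
    unfolding mult_2 power_add by (simp add: power_divide)
  moreover have "(W * U / B\<^sup>2) ^ n = W ^ n * U ^ n / (B ^ n * B ^ n)"
    by (simp add: power_divide power_mult_distrib power_mult[symmetric] mult_2[symmetric] power_add[symmetric])
  moreover have "W ^ n > 0" "B ^ n > 0"
    using assms by simp_all
  ultimately show ?thesis
    using assms by (simp add: field_simps power2_eq_square)
qed

lemma borel_measurable_disc_kernel: "disc_kernel n w \<zeta> \<in> borel_measurable borel"
  unfolding disc_kernel_def[abs_def]
  by (intro borel_measurable_divide borel_measurable_continuous_onI continuous_intros)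

text \<open>The first factor is the Jacobian of the substitution z = Moebius_function 0 (- w) u, which
  turns the kernel into a Poisson weight at the boundary point Moebius_function 0 w \<zeta>.\<close>
lemma disc_kernel_Moebius_substitution:
  assumes w: "cmod w < 1" and u: "cmod u < 1" and \<zeta>: "cmod \<zeta> = 1"
  shows "(cmod (of_real (1 - (cmod w)\<^sup>2) / (1 + cnj w * u)\<^sup>2))\<^sup>2 * disc_kernel n w \<zeta> (Moebius_function 0 (- w) u) =
    (1 - (cmod u)\<^sup>2) ^ n /
      ((1 - (cmod w)\<^sup>2) ^ n * (cmod (1 - \<zeta> * cnj w))\<^sup>2 * (cmod (u - Moebius_function 0 w \<zeta>))\<^sup>2)"
proof -
  define W where "W = 1 - (cmod w)\<^sup>2"
  define B where "B = cmod (1 + cnj w * u)"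
  define c where "c = cmod (1 - \<zeta> * cnj w)"
  define d where "d = cmod (u - Moebius_function 0 w \<zeta>)"
  have nz_u: "1 + cnj w * u \<noteq> 0"
    using one_minus_cnj_mult_nonzero[of "- w" u] w u by simp
  have nz_\<zeta>: "1 - cnj w * \<zeta> \<noteq> 0"
    using one_minus_cnj_mult_nonzero[of w \<zeta>] w \<zeta> by simp
  have "W > 0" "B > 0" "c > 0"
    using w nz_u nz_\<zeta> by (simp_all add: W_def B_def c_def power_less_one_iff abs_square_less_1 mult.commute)
  have "d > 0"
    using norm_Moebius_function_0_sphere[OF w \<zeta>] u by (auto simp: d_def)
  have e1: "1 - (cmod (Moebius_function 0 (- w) u))\<^sup>2 = W * (1 - (cmod u)\<^sup>2) / B\<^sup>2"
    using one_minus_norm_Moebius_function_0[of "- w" u] nz_u by (simp add: W_def B_def)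
  have e2: "cmod (1 - Moebius_function 0 (- w) u * cnj w) = W / B"
  proof -
    have "1 - Moebius_function 0 (- w) u * cnj w = (1 - w * cnj w) / (1 + cnj w * u)"
      using nz_u by (simp add: Moebius_function_simple divide_simps) (simp add: algebra_simps)
    also have "\<dots> = of_real W / (1 + cnj w * u)"
      by (simp add: W_def complex_mult_cnj cmod_power2)
    finally show ?thesis
      using \<open>W > 0\<close> by (simp add: norm_divide B_def)
  qed
  have e3: "cmod (Moebius_function 0 (- w) u - \<zeta>) = c * d / B"
  proof -
    have "Moebius_function 0 (- w) u - \<zeta> = (1 - cnj w * \<zeta>) * (u - Moebius_function 0 w \<zeta>) / (1 + cnj w * u)"
      using nz_u nz_\<zeta> by (simp add: Moebius_function_simple divide_simps) (simp add: algebra_simps)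
    then show ?thesis
      by (simp add: norm_divide norm_mult c_def d_def B_def mult.commute)
  qed
  have e4: "cmod (of_real W / (1 + cnj w * u)\<^sup>2) = W / B\<^sup>2"
    using \<open>W > 0\<close> by (simp add: norm_divide norm_power B_def)
  have "(cmod (of_real W / (1 + cnj w * u)\<^sup>2))\<^sup>2 * disc_kernel n w \<zeta> (Moebius_function 0 (- w) u) =
      (W / B\<^sup>2)\<^sup>2 * ((W * (1 - (cmod u)\<^sup>2) / B\<^sup>2) ^ n / ((W / B) ^ (2 * n + 2) * (c * d / B)\<^sup>2))"
    unfolding disc_kernel_def e1 e2 e3 e4 ..
  also have "\<dots> = (1 - (cmod u)\<^sup>2) ^ n / (W ^ n * c\<^sup>2 * d\<^sup>2)"
    using \<open>W > 0\<close> \<open>B > 0\<close> \<open>c > 0\<close> \<open>d > 0\<close> by (rule disc_kernel_substitution_algebra)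
  finally show ?thesis
    by (simp only: W_def c_def d_def)
qed

lemma nn_integral_disc_kernel:
  assumes \<zeta>: "cmod \<zeta> = 1" and w: "cmod w < 1" and n: "n \<ge> 1"
  shows "(\<integral>\<^sup>+z. ennreal (indicator (ball 0 1) z * disc_kernel n w \<zeta> z) \<partial>lborel) =
    ennreal (pi / (n * (1 - (cmod w)\<^sup>2) ^ n * (cmod (1 - \<zeta> * cnj w))\<^sup>2))"
proof -
  define C where "C = (1 - (cmod w)\<^sup>2) ^ n * (cmod (1 - \<zeta> * cnj w))\<^sup>2"
  define P where "P u = indicator (ball 0 1) u * ((1 - (cmod u)\<^sup>2) ^ n / (cmod (u - Moebius_function 0 w \<zeta>))\<^sup>2)"
    for u
  have "C > 0"
    using one_minus_cnj_mult_nonzero[of w \<zeta>] w \<zeta>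
    by (simp add: C_def power_less_one_iff abs_square_less_1 mult.commute)
  have "P \<in> borel_measurable borel"
    unfolding P_def
    by (intro borel_measurable_times borel_measurable_indicator borel_measurable_divide
        borel_measurable_continuous_onI continuous_intros) auto
  have "(\<integral>\<^sup>+z. ennreal (indicator (ball 0 1) z * disc_kernel n w \<zeta> z) \<partial>lborel) =
      (\<integral>\<^sup>+u. ennreal (indicator (ball 0 1) u * ((cmod (of_real (1 - (cmod w)\<^sup>2) / (1 + cnj w * u)\<^sup>2))\<^sup>2 *
        disc_kernel n w \<zeta> (Moebius_function 0 (- w) u))) \<partial>lborel)"
    using nn_integral_unit_disc_Moebius[of "- w" "disc_kernel n w \<zeta>"] w borel_measurable_disc_kernel
    by (simp add: disc_kernel_nonneg)
  also have "\<dots> = (\<integral>\<^sup>+u. ennreal (1 / C) * ennreal (P u) \<partial>lborel)"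
  proof (intro nn_integral_cong)
    fix u
    have "indicator (ball 0 1) u * ((cmod (of_real (1 - (cmod w)\<^sup>2) / (1 + cnj w * u)\<^sup>2))\<^sup>2 *
        disc_kernel n w \<zeta> (Moebius_function 0 (- w) u)) = 1 / C * P u"
      using disc_kernel_Moebius_substitution[OF w _ \<zeta>, of u n] by (simp add: P_def C_def indicator_def)
    then show "ennreal (indicator (ball 0 1) u * ((cmod (of_real (1 - (cmod w)\<^sup>2) / (1 + cnj w * u)\<^sup>2))\<^sup>2 *
        disc_kernel n w \<zeta> (Moebius_function 0 (- w) u))) = ennreal (1 / C) * ennreal (P u)"
      using ennreal_mult'[of "1 / C" "P u"] \<open>C > 0\<close> by simp
  qed
  also have "\<dots> = ennreal (1 / C) * (\<integral>\<^sup>+u. ennreal (P u) \<partial>lborel)"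
    using \<open>P \<in> borel_measurable borel\<close> by (simp add: nn_integral_cmult)
  also have "\<dots> = ennreal (1 / C) * ennreal (pi / n)"
    using nn_integral_disc_poisson_weight[OF norm_Moebius_function_0_sphere[OF w \<zeta>] n] by (simp add: P_def)
  also have "\<dots> = ennreal (pi / (n * (1 - (cmod w)\<^sup>2) ^ n * (cmod (1 - \<zeta> * cnj w))\<^sup>2))"
    using \<open>C > 0\<close> by (simp add: ennreal_mult[symmetric] C_def mult_ac)
  finally show ?thesis .
qed

section \<open>The weighted Dirichlet integral of the Cauchy kernel\<close>

lemma higher_deriv_cauchy_kernel:
  fixes a :: complex
  shows "z * a \<noteq> 1 \<Longrightarrow> (deriv ^^ k) (\<lambda>z. 1 / (1 - z * a)) z = fact k * a ^ k / (1 - z * a) ^ (k + 1)"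
proof (induction k arbitrary: z)
  case (Suc k)
  define b where "b = 1 - z * a"
  have "b \<noteq> 0"
    using Suc.prems by (simp add: b_def)
  have "((\<lambda>z. fact k * a ^ k / (1 - z * a) ^ (k + 1)) has_field_derivative
      - (fact k * a ^ k * (of_nat (k + 1) * b ^ k * (0 - a))) / (b ^ (k + 1) * b ^ (k + 1))) (at z)"
    unfolding b_def by (intro derivative_eq_intros refl) (use Suc.prems in auto)
  moreover have "- (fact k * a ^ k * (of_nat (k + 1) * b ^ k * (0 - a))) / (b ^ (k + 1) * b ^ (k + 1)) =
      fact (Suc k) * a ^ Suc k / b ^ (Suc k + 1)"
    using \<open>b \<noteq> 0\<close> by (simp add: field_simps)
  ultimately have "((\<lambda>z. fact k * a ^ k / (1 - z * a) ^ (k + 1)) has_field_derivative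
      fact (Suc k) * a ^ Suc k / (1 - z * a) ^ (Suc k + 1)) (at z)"
    by (simp add: b_def)
  then have "((deriv ^^ k) (\<lambda>z. 1 / (1 - z * a)) has_field_derivative
      fact (Suc k) * a ^ Suc k / (1 - z * a) ^ (Suc k + 1)) (at z)"
    by (rule has_field_derivative_transform_within_open[where S = "{z. z * a \<noteq> 1}"])
      (use Suc in \<open>auto intro!: open_Collect_neq continuous_intros\<close>)
  then show ?case
    by (simp add: DERIV_imp_deriv)
qed simp

lemma circle_measure_AE_norm_eq_1:
  assumes "circle_measure \<mu>"
  shows "AE \<zeta> in \<mu>. cmod \<zeta> = 1"
proof (rule AE_I')
  have "UNIV - sphere (0::complex) 1 \<in> sets borel"
    by (simp add: borel_open open_Diff)
  then show "UNIV - sphere 0 1 \<in> null_sets \<mu>"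
    using assms by (simp add: circle_measure_def null_sets_def)
qed auto

lemma nn_integral_circle_measure_eq_integral:
  fixes f :: "complex \<Rightarrow> real"
  assumes \<mu>: "circle_measure \<mu>" and f: "f \<in> borel_measurable borel"
    and nonneg: "\<And>\<zeta>. 0 \<le> f \<zeta>" and bounded: "\<And>\<zeta>. cmod \<zeta> = 1 \<Longrightarrow> f \<zeta> \<le> B"
  shows "(\<integral>\<^sup>+\<zeta>. ennreal (f \<zeta>) \<partial>\<mu>) = ennreal (\<integral>\<zeta>. f \<zeta> \<partial>\<mu>)"
proof (rule nn_integral_eq_integral)
  interpret finite_measure \<mu>
    using \<mu> by (simp add: circle_measure_def)
  have "sets \<mu> = sets borel"
    using \<mu> by (simp add: circle_measure_def)
  then have "f \<in> borel_measurable \<mu>"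
    using f measurable_cong_sets[OF _ refl] by blast
  moreover have "AE \<zeta> in \<mu>. norm (f \<zeta>) \<le> B"
    using circle_measure_AE_norm_eq_1[OF \<mu>] by eventually_elim (simp add: nonneg bounded)
  ultimately show "integrable \<mu> f"
    by (rule integrable_const_bound[rotated])
qed (simp add: nonneg)

lemma poisson_eq_nn_integral:
  assumes \<mu>: "circle_measure \<mu>" and z: "cmod z < 1"
  shows "ennreal (poisson \<mu> z) = (\<integral>\<^sup>+\<zeta>. ennreal ((1 - (cmod z)\<^sup>2) / (cmod (z - \<zeta>))\<^sup>2) \<partial>\<mu>)"
  unfolding poisson_def
proof (rule nn_integral_circle_measure_eq_integral[OF \<mu>, symmetric])
  show "(1 - (cmod z)\<^sup>2) / (cmod (z - \<zeta>))\<^sup>2 \<le> (1 - (cmod z)\<^sup>2) / (1 - cmod z)\<^sup>2" if "cmod \<zeta> = 1" for \<zeta>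
  proof -
    have "0 < (1 - cmod z)\<^sup>2" "0 \<le> 1 - (cmod z)\<^sup>2"
      using z by (simp_all add: abs_square_le_1)
    moreover have "(1 - cmod z)\<^sup>2 \<le> (cmod (z - \<zeta>))\<^sup>2"
      using norm_triangle_ineq2[of \<zeta> z] that z by (intro power_mono) (auto simp: norm_minus_commute)
    ultimately show ?thesis
      by (meson divide_left_mono less_le_trans mult_pos_pos)
  qed
qed (use z in \<open>auto intro!: borel_measurable_divide borel_measurable_continuous_onI continuous_intros
    simp: abs_square_le_1\<close>)

lemma V_mu_eq_nn_integral:
  assumes \<mu>: "circle_measure \<mu>" and w: "cmod w < 1" and c: "0 \<le> c"
  shows "ennreal (c * V_mu \<mu> w) = (\<integral>\<^sup>+\<zeta>. ennreal (c / (cmod (1 - \<zeta> * cnj w))\<^sup>2) \<partial>\<mu>)"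
proof -
  have "(\<integral>\<^sup>+\<zeta>. ennreal (c / (cmod (1 - \<zeta> * cnj w))\<^sup>2) \<partial>\<mu>) = ennreal (\<integral>\<zeta>. c / (cmod (1 - \<zeta> * cnj w))\<^sup>2 \<partial>\<mu>)"
  proof (rule nn_integral_circle_measure_eq_integral[OF \<mu>])
    show "c / (cmod (1 - \<zeta> * cnj w))\<^sup>2 \<le> c / (1 - cmod w)\<^sup>2" if "cmod \<zeta> = 1" for \<zeta>
    proof -
      have "0 < (1 - cmod w)\<^sup>2"
        using w by simp
      moreover have "(1 - cmod w)\<^sup>2 \<le> (cmod (1 - \<zeta> * cnj w))\<^sup>2"
        using norm_triangle_ineq2[of 1 "\<zeta> * cnj w"] that w by (intro power_mono) (auto simp: norm_mult)
      ultimately show ?thesis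
        using c by (meson divide_left_mono less_le_trans mult_pos_pos)
    qed
  qed (use c in \<open>auto intro!: borel_measurable_divide borel_measurable_continuous_onI continuous_intros\<close>)
  then show ?thesis
    by (simp add: V_mu_def flip: integral_mult_right_zero)
qed

lemma D_mu_n_integrand_cauchy_kernel:
  assumes \<mu>: "circle_measure \<mu>" and n: "n \<ge> 1" and w: "cmod w < 1" and z: "cmod z < 1"
  shows "ennreal ((cmod ((deriv ^^ n) (\<lambda>z. 1 / (1 - z * cnj w)) z))\<^sup>2 * poisson \<mu> z * (1 - (cmod z)\<^sup>2) ^ (n - 1)) =
    ennreal ((fact n)\<^sup>2 * (cmod w) ^ (2 * n)) * (\<integral>\<^sup>+\<zeta>. ennreal (disc_kernel n w \<zeta> z) \<partial>\<mu>)"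
proof -
  define c where "c = (1 - (cmod z)\<^sup>2) ^ (n - 1) / (cmod (1 - z * cnj w)) ^ (2 * n + 2)"
  have "c \<ge> 0"
    using z by (simp add: c_def power_le_one abs_square_le_1)
  have "z * cnj w \<noteq> 1"
    using one_minus_cnj_mult_nonzero[of w z] w z by (simp add: mult.commute)
  moreover have "(cmod w ^ n)\<^sup>2 = cmod w ^ (2 * n)" "(cmod (1 - z * cnj w) ^ (n + 1))\<^sup>2 =
      cmod (1 - z * cnj w) ^ (2 * n + 2)"
    by (simp_all only: power_mult[symmetric] mult.commute) (simp_all add: algebra_simps)
  ultimately have integrand: "(cmod ((deriv ^^ n) (\<lambda>z. 1 / (1 - z * cnj w)) z))\<^sup>2 * poisson \<mu> z *
      (1 - (cmod z)\<^sup>2) ^ (n - 1) = (fact n)\<^sup>2 * (cmod w) ^ (2 * n) * (c * poisson \<mu> z)"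
    by (simp add: higher_deriv_cauchy_kernel c_def norm_divide norm_mult norm_power power_divide
        power_mult_distrib)
  then have "ennreal ((cmod ((deriv ^^ n) (\<lambda>z. 1 / (1 - z * cnj w)) z))\<^sup>2 * poisson \<mu> z *
      (1 - (cmod z)\<^sup>2) ^ (n - 1)) = ennreal ((fact n)\<^sup>2 * (cmod w) ^ (2 * n)) * (ennreal c * ennreal (poisson \<mu> z))"
    unfolding integrand using \<open>c \<ge> 0\<close>
    by (simp only: ennreal_mult'[of "(fact n)\<^sup>2 * (cmod w) ^ (2 * n)"] ennreal_mult'[of c] zero_le_mult_iff
        fact_ge_zero zero_le_power2 zero_le_power norm_ge_zero simp_thms)
  also have "ennreal c * ennreal (poisson \<mu> z) =
      (\<integral>\<^sup>+\<zeta>. ennreal c * ennreal ((1 - (cmod z)\<^sup>2) / (cmod (z - \<zeta>))\<^sup>2) \<partial>\<mu>)"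
    using \<mu> unfolding poisson_eq_nn_integral[OF \<mu> z] circle_measure_def
    by (intro nn_integral_cmult[symmetric]) (auto intro!: measurable_compose[OF _ measurable_ennreal]
        borel_measurable_divide borel_measurable_continuous_onI continuous_intros)
  also have "\<dots> = (\<integral>\<^sup>+\<zeta>. ennreal (disc_kernel n w \<zeta> z) \<partial>\<mu>)"
  proof (intro nn_integral_cong)
    fix \<zeta>
    have "(1 - (cmod z)\<^sup>2) ^ n = (1 - (cmod z)\<^sup>2) ^ (n - 1) * (1 - (cmod z)\<^sup>2)"
      using n by (cases n) auto
    then have "disc_kernel n w \<zeta> z = c * ((1 - (cmod z)\<^sup>2) / (cmod (z - \<zeta>))\<^sup>2)"
      by (simp add: c_def disc_kernel_def)
    then show "ennreal c * ennreal ((1 - (cmod z)\<^sup>2) / (cmod (z - \<zeta>))\<^sup>2) = ennreal (disc_kernel n w \<zeta> z)"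
      using ennreal_mult'[OF \<open>c \<ge> 0\<close>] by (simp only:)
  qed
  finally show ?thesis .
qed

lemma nn_integral_dA:
  assumes "f \<in> borel_measurable borel"
  shows "(\<integral>\<^sup>+z. f z \<partial>dA) = ennreal (1 / pi) * (\<integral>\<^sup>+z. f z * indicator (ball 0 1) z \<partial>lborel)"
proof -
  have "(\<integral>\<^sup>+z. f z \<partial>dA) = (\<integral>\<^sup>+z. ennreal (1 / pi) * f z \<partial>restrict_space lborel (ball 0 1))"
    unfolding dA_def using assms by (intro nn_integral_density) (auto intro: measurable_restrict_space1)
  also have "\<dots> = (\<integral>\<^sup>+z. ennreal (1 / pi) * (f z * indicator (ball 0 1) z) \<partial>lborel)"
    by (simp add: nn_integral_restrict_space mult.assoc)
  also have "\<dots> = ennreal (1 / pi) * (\<integral>\<^sup>+z. f z * indicator (ball 0 1) z \<partial>lborel)"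
    using assms by (intro nn_integral_cmult borel_measurable_times_ennreal borel_measurable_indicator) auto
  finally show ?thesis .
qed

lemma borel_measurable_pair_lborel:
  fixes f :: "complex \<times> complex \<Rightarrow> ennreal"
  assumes "sets \<mu> = sets borel" and "f \<in> borel_measurable borel"
  shows "f \<in> borel_measurable (lborel \<Otimes>\<^sub>M \<mu>)"
proof -
  have "sets (lborel \<Otimes>\<^sub>M \<mu>) = sets (borel :: (complex \<times> complex) measure)"
    using sets_pair_measure_cong[OF sets_lborel assms(1)] borel_prod[where 'a=complex and 'b=complex]
    by metis
  then show ?thesis
    using assms(2) measurable_cong_sets by blast
qed

lemma borel_measurable_disc_kernel_pair:
  "(\<lambda>(z, \<zeta>). ennreal (indicator (ball 0 1) z * disc_kernel n w \<zeta> z)) \<in> borel_measurable borel"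
proof -
  have "fst \<in> (borel :: (complex \<times> complex) measure) \<rightarrow>\<^sub>M borel"
    by (intro borel_measurable_continuous_onI continuous_on_fst continuous_on_id)
  then have ind: "(\<lambda>p::complex \<times> complex. indicator (ball 0 1) (fst p) :: real) \<in> borel_measurable borel"
    by (rule measurable_compose[OF _ borel_measurable_indicator]) simp
  have "(\<lambda>p. indicator (ball 0 1) (fst p) * disc_kernel n w (snd p) (fst p)) \<in> borel_measurable borel"
    unfolding disc_kernel_def
    by (intro borel_measurable_times ind borel_measurable_divide borel_measurable_continuous_onI continuous_intros)
  then show ?thesis
    unfolding case_prod_beta by measurable
qed

lemma D_mu_n_cauchy_kernel_eq_iterated_integral:
  assumes \<mu>: "circle_measure \<mu>" and n: "n \<ge> 1" and w: "cmod w < 1"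
  shows "D_mu_n \<mu> n (\<lambda>z. 1 / (1 - z * cnj w)) =
    ennreal ((fact n)\<^sup>2 * (cmod w) ^ (2 * n) / (fact n * fact (n - 1) * pi)) *
      (\<integral>\<^sup>+\<zeta>. \<integral>\<^sup>+z. ennreal (indicator (ball 0 1) z * disc_kernel n w \<zeta> z) \<partial>lborel \<partial>\<mu>)"
proof -
  define C where "C = (fact n)\<^sup>2 * (cmod w) ^ (2 * n)"
  define F where "F z \<zeta> = ennreal (indicator (ball 0 1) z * disc_kernel n w \<zeta> z)" for z \<zeta>
  interpret \<mu>: finite_measure \<mu>
    using \<mu> by (simp add: circle_measure_def)
  interpret pair_sigma_finite lborel \<mu>
    by (intro pair_sigma_finite.intro lborel.sigma_finite_measure_axioms \<mu>.sigma_finite_measure_axioms)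
  have F: "(\<lambda>(z, \<zeta>). F z \<zeta>) \<in> borel_measurable (lborel \<Otimes>\<^sub>M \<mu>)"
    using \<mu> unfolding F_def
    by (intro borel_measurable_pair_lborel borel_measurable_disc_kernel_pair) (simp add: circle_measure_def)
  note G = \<mu>.borel_measurable_nn_integral[OF F]
  have "(\<integral>\<^sup>+z. ennreal ((cmod ((deriv ^^ n) (\<lambda>z. 1 / (1 - z * cnj w)) z))\<^sup>2 * poisson \<mu> z *
      (1 - (cmod z)\<^sup>2) ^ (n - 1)) \<partial>dA) = (\<integral>\<^sup>+z. ennreal C * (\<integral>\<^sup>+\<zeta>. F z \<zeta> \<partial>\<mu>) \<partial>dA)"
    using D_mu_n_integrand_cauchy_kernel[OF \<mu> n w]
    by (intro nn_integral_cong) (simp add: dA_def space_restrict_space F_def C_def)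
  also have "\<dots> = ennreal (1 / pi) * (\<integral>\<^sup>+z. ennreal C * (\<integral>\<^sup>+\<zeta>. F z \<zeta> \<partial>\<mu>) * indicator (ball 0 1) z \<partial>lborel)"
    using G by (intro nn_integral_dA) simp
  also have "\<dots> = ennreal (1 / pi) * (ennreal C * (\<integral>\<^sup>+z. \<integral>\<^sup>+\<zeta>. F z \<zeta> \<partial>\<mu> \<partial>lborel))"
  proof -
    have "ennreal C * (\<integral>\<^sup>+\<zeta>. F z \<zeta> \<partial>\<mu>) * indicator (ball 0 1) z = ennreal C * (\<integral>\<^sup>+\<zeta>. F z \<zeta> \<partial>\<mu>)" for z
      by (cases "z \<in> ball 0 1") (simp_all add: F_def)
    then show ?thesis
      using G by (simp add: nn_integral_cmult)
  qed
  also have "\<dots> = ennreal (1 / pi) * (ennreal C * (\<integral>\<^sup>+\<zeta>. \<integral>\<^sup>+z. F z \<zeta> \<partial>lborel \<partial>\<mu>))"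
    by (simp only: Fubini'[OF F])
  finally have dA: "(\<integral>\<^sup>+z. ennreal ((cmod ((deriv ^^ n) (\<lambda>z. 1 / (1 - z * cnj w)) z))\<^sup>2 * poisson \<mu> z *
      (1 - (cmod z)\<^sup>2) ^ (n - 1)) \<partial>dA) = ennreal (1 / pi) * (ennreal C * (\<integral>\<^sup>+\<zeta>. \<integral>\<^sup>+z. F z \<zeta> \<partial>lborel \<partial>\<mu>))" .
  have "ennreal (C / (fact n * fact (n - 1) * pi)) =
      ennreal (1 / (fact n * fact (n - 1))) * (ennreal (1 / pi) * ennreal C)"
    by (simp add: ennreal_mult'[symmetric] C_def)
  then show ?thesis
    unfolding D_mu_n_def dA F_def C_def[symmetric] by (simp only: mult.assoc)
qed

theorem lemma5p1:
  fixes \<mu> :: "complex measure" and n :: nat and w :: complex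
  assumes "circle_measure \<mu>" and "n \<ge> 1" and "cmod w < 1"
  shows "D_mu_n \<mu> n (\<lambda>z. 1 / (1 - z * cnj w)) =
         ennreal ((cmod w) ^ (2 * n) / (1 - (cmod w)\<^sup>2) ^ n * V_mu \<mu> w)"
proof -
  let ?K = "(fact n)\<^sup>2 * (cmod w) ^ (2 * n) / (fact n * fact (n - 1) * pi)"
    and ?a = "pi / (n * (1 - (cmod w)\<^sup>2) ^ n)"
  have "AE \<zeta> in \<mu>. (\<integral>\<^sup>+z. ennreal (indicator (ball 0 1) z * disc_kernel n w \<zeta> z) \<partial>lborel) =
      ennreal (?a / (cmod (1 - \<zeta> * cnj w))\<^sup>2)"
    using circle_measure_AE_norm_eq_1[OF assms(1)]
    by eventually_elim (subst nn_integral_disc_kernel, use assms in auto)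
  then have "D_mu_n \<mu> n (\<lambda>z. 1 / (1 - z * cnj w)) =
      ennreal ?K * (\<integral>\<^sup>+\<zeta>. ennreal (?a / (cmod (1 - \<zeta> * cnj w))\<^sup>2) \<partial>\<mu>)"
    unfolding D_mu_n_cauchy_kernel_eq_iterated_integral[OF assms] by (simp only: nn_integral_cong_AE)
  also have "\<dots> = ennreal ?K * ennreal (?a * V_mu \<mu> w)"
    using assms(3) by (subst V_mu_eq_nn_integral[OF assms(1,3)]) (auto simp: abs_square_le_1)
  also have "\<dots> = ennreal (?K * (?a * V_mu \<mu> w))"
    by (rule ennreal_mult'[symmetric]) simp
  also have "?K * (?a * V_mu \<mu> w) = (cmod w) ^ (2 * n) / (1 - (cmod w)\<^sup>2) ^ n * V_mu \<mu> w"
    using assms(2) fact_reduce[of n, where 'a=real] by (simp add: power2_eq_square field_simps)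
  finally show ?thesis .
qed

end
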